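(* Consider the two-party spatial voting game with abstention described in the context. Suppose (1) both parties' preferences are single-peaked, and (2) the parties agree on cross-side comparisons: for all positive integers $a,b$ such that the relevant policies belong to $X$, \[ R_A(a)\succeq_A L_A(b)\iff R_B(a)\succeq_B L_B(b) \quad\text{and}\quad L_A(b)\succeq_A R_A(a)\iff L_B(b)\succeq_B R_B(a). \] Then no pure-strategy Nash equilibrium exhibits mutual leapfrogging, i.e. there is no pure-strategy Nash equilibrium $(s,t)$ with $t<\tau_A<\tau_B<s$.
   Context: Policy space: $X=\{x_j : j\in I\}$ where $I\subseteq\mathbb Z$ is an interval of integers and $x_j<x_{j+1}$; $X$ is linearly ordered by $<$. Parties: two parties $A$ and $B$ with ideal points $\tau_A=x_p$ and $\tau_B=x_q$, where $p<q$. Each party $i\in\{A,B\}$ has a weak preference order $\succeq_i$ on $X$ with unique ideal point $\tau_i$; $x\succ_i y$ means $x\succeq_i y$ and not $y\succeq_i x$. Single-peakedness of $\succeq_i$: if $x_a<x_b\le\tau_i$ then $x_b\succ_i x_a$, and if $\tau_i\le x_b<x_a$ then $x_b\succ_i x_a$. Ordinal displacements: if $\tau_i=x_c$ and $k$ is a positive integer, $R_i(k)=x_{c+k}$ and $L_i(k)=x_{c-k}$ whenever these belong to $X$. Voters: a finite electorate $V$. Each voter $v\in V$ has an ideal point $\theta_v\in X$, strict single-peaked preferences over $X$ with peak $\theta_v$, and an attraction interval $A_v\subseteq X$, an interval of the order on $X$ containing $\theta_v$. Election: party $A$ chooses $s\in X$, party $B$ chooses $t\in X$. Voter $v$ is active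 at $(s,t)$ if $s\in A_v$ or $t\in A_v$. An active voter votes for the platform she strictly prefers and abstains if indifferent (in particular if $s=t$); inactive voters abstain. $N_A(s,t)$ (resp. $N_B(s,t)$) is the number of active voters strictly preferring $s$ to $t$ (resp. $t$ to $s$). The outcome $g(s,t)$ is $A$ if $N_A>N_B$, $B$ if $N_B>N_A$, and $T$ (tie) if equal. Party objectives (lexicographic): Win $\succ$ Tie $\succ$ Lose for each party (outcome $A$ is a win for $A$ and a loss for $B$, and vice versa); between profiles with the same electoral outcome, $A$ weakly prefers $(s,t)$ to $(s',t')$ iff $s\succeq_A s'$, and $B$ iff $t\succeq_B t'$. A pure-strategy Nash equilibrium is a profile at which neither party has a strictly preferred unilateral deviation. *)

theory Defs
  imports Main
begin

text \<open>Policy x_j is identified with its index j; the policy space is an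
  interval I of integers, ordered by the integer order.\<close>

definition int_interval :: "int set \<Rightarrow> bool" where
  "int_interval I \<longleftrightarrow> (\<forall>a\<in>I. \<forall>c\<in>I. \<forall>b. a \<le> b \<and> b \<le> c \<longrightarrow> b \<in> I)"

definition spref :: "(int \<Rightarrow> int \<Rightarrow> bool) \<Rightarrow> int \<Rightarrow> int \<Rightarrow> bool" where
  "spref R x y \<longleftrightarrow> R x y \<and> \<not> R y x"

definition weak_order_on :: "int set \<Rightarrow> (int \<Rightarrow> int \<Rightarrow> bool) \<Rightarrow> bool" where
  "weak_order_on I R \<longleftrightarrow>
     (\<forall>x\<in>I. \<forall>y\<in>I. R x y \<or> R y x) \<and>
     (\<forall>x\<in>I. \<forall>y\<in>I. \<forall>z\<in>I. R x y \<and> R y z \<longrightarrow> R x z)"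

definition unique_ideal :: "int set \<Rightarrow> (int \<Rightarrow> int \<Rightarrow> bool) \<Rightarrow> int \<Rightarrow> bool" where
  "unique_ideal I R c \<longleftrightarrow> c \<in> I \<and> (\<forall>x\<in>I. x \<noteq> c \<longrightarrow> spref R c x)"

definition single_peaked :: "int set \<Rightarrow> (int \<Rightarrow> int \<Rightarrow> bool) \<Rightarrow> int \<Rightarrow> bool" where
  "single_peaked I R c \<longleftrightarrow>
     (\<forall>a\<in>I. \<forall>b\<in>I. a < b \<and> b \<le> c \<longrightarrow> spref R b a) \<and>
     (\<forall>a\<in>I. \<forall>b\<in>I. c \<le> b \<and> b < a \<longrightarrow> spref R b a)"

definition strict_linear_on :: "int set \<Rightarrow> (int \<Rightarrow> int \<Rightarrow> bool) \<Rightarrow> bool" where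
  "strict_linear_on I P \<longleftrightarrow>
     (\<forall>x\<in>I. \<not> P x x) \<and>
     (\<forall>x\<in>I. \<forall>y\<in>I. \<forall>z\<in>I. P x y \<and> P y z \<longrightarrow> P x z) \<and>
     (\<forall>x\<in>I. \<forall>y\<in>I. x \<noteq> y \<longrightarrow> P x y \<or> P y x)"

definition strict_single_peaked :: "int set \<Rightarrow> (int \<Rightarrow> int \<Rightarrow> bool) \<Rightarrow> int \<Rightarrow> bool" where
  "strict_single_peaked I P c \<longleftrightarrow>
     (\<forall>a\<in>I. \<forall>b\<in>I. a < b \<and> b \<le> c \<longrightarrow> P b a) \<and>
     (\<forall>a\<in>I. \<forall>b\<in>I. c \<le> b \<and> b < a \<longrightarrow> P b a)"

text \<open>Cross-side agreement: for positive integers a b with p+a, p-b, q+a, q-b in I,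
  R_A(a) >=_A L_A(b) iff R_B(a) >=_B L_B(b), and L_A(b) >=_A R_A(a) iff L_B(b) >=_B R_B(a).\<close>
definition cross_agree :: "int set \<Rightarrow> (int \<Rightarrow> int \<Rightarrow> bool) \<Rightarrow> (int \<Rightarrow> int \<Rightarrow> bool) \<Rightarrow> int \<Rightarrow> int \<Rightarrow> bool" where
  "cross_agree I RA RB p q \<longleftrightarrow>
     (\<forall>a b::int. 0 < a \<and> 0 < b \<and> p + a \<in> I \<and> p - b \<in> I \<and> q + a \<in> I \<and> q - b \<in> I \<longrightarrow>
        (RA (p + a) (p - b) \<longleftrightarrow> RB (q + a) (q - b)) \<and>
        (RA (p - b) (p + a) \<longleftrightarrow> RB (q - b) (q + a)))"

datatype outcome = WinA | WinB | Tie

definition active :: "('v \<Rightarrow> int set) \<Rightarrow> 'v \<Rightarrow> int \<Rightarrow> int \<Rightarrow> bool" where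
  "active Att v s t \<longleftrightarrow> s \<in> Att v \<or> t \<in> Att v"

definition votes :: "'v set \<Rightarrow> ('v \<Rightarrow> int set) \<Rightarrow> ('v \<Rightarrow> int \<Rightarrow> int \<Rightarrow> bool) \<Rightarrow> int \<Rightarrow> int \<Rightarrow> int \<Rightarrow> int \<Rightarrow> nat" where
  "votes V Att P s t x y = card {v \<in> V. active Att v s t \<and> P v x y}"

definition NA :: "'v set \<Rightarrow> ('v \<Rightarrow> int set) \<Rightarrow> ('v \<Rightarrow> int \<Rightarrow> int \<Rightarrow> bool) \<Rightarrow> int \<Rightarrow> int \<Rightarrow> nat" where
  "NA V Att P s t = votes V Att P s t s t"

definition NB :: "'v set \<Rightarrow> ('v \<Rightarrow> int set) \<Rightarrow> ('v \<Rightarrow> int \<Rightarrow> int \<Rightarrow> bool) \<Rightarrow> int \<Rightarrow> int \<Rightarrow> nat" where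
  "NB V Att P s t = votes V Att P s t t s"

definition outcome :: "'v set \<Rightarrow> ('v \<Rightarrow> int set) \<Rightarrow> ('v \<Rightarrow> int \<Rightarrow> int \<Rightarrow> bool) \<Rightarrow> int \<Rightarrow> int \<Rightarrow> outcome" where
  "outcome V Att P s t =
     (if NA V Att P s t > NB V Att P s t then WinA
      else if NB V Att P s t > NA V Att P s t then WinB else Tie)"

fun rankA :: "outcome \<Rightarrow> nat" where
  "rankA WinA = 2" | "rankA Tie = 1" | "rankA WinB = 0"

fun rankB :: "outcome \<Rightarrow> nat" where
  "rankB WinB = 2" | "rankB Tie = 1" | "rankB WinA = 0"

definition is_NE :: "int set \<Rightarrow> (int \<Rightarrow> int \<Rightarrow> bool) \<Rightarrow> (int \<Rightarrow> int \<Rightarrow> bool) \<Rightarrow>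
    'v set \<Rightarrow> ('v \<Rightarrow> int set) \<Rightarrow> ('v \<Rightarrow> int \<Rightarrow> int \<Rightarrow> bool) \<Rightarrow> int \<Rightarrow> int \<Rightarrow> bool" where
  "is_NE I RA RB V Att P s t \<longleftrightarrow> s \<in> I \<and> t \<in> I \<and>
     (\<forall>s'\<in>I. \<not> (rankA (outcome V Att P s' t) > rankA (outcome V Att P s t) \<or>
                 (outcome V Att P s' t = outcome V Att P s t \<and> spref RA s' s))) \<and>
     (\<forall>t'\<in>I. \<not> (rankB (outcome V Att P s t') > rankB (outcome V Att P s t) \<or>
                 (outcome V Att P s t' = outcome V Att P s t \<and> spref RB t' t)))"

end

theory Submission
  imports Defs
begin

text \<open>Copying the opponent's platform always produces a tie, so at an equilibrium
  \<open>(s, t)\<close> the outcome is a tie and each party weakly prefers its own platform to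
  the opponent's: \<open>s \<succeq>\<^sub>A t\<close> and \<open>t \<succeq>\<^sub>B s\<close>. This is all that is used about the
  electorate. Now let \<open>t < p < q < s\<close> and mirror \<open>s\<close> into \<open>A\<close>'s frame,
  \<open>m = R\<^sub>A(s - q)\<close>, and \<open>t\<close> into \<open>B\<close>'s frame, \<open>n = L\<^sub>B(p - t)\<close>. Single-peakedness gives
  \<open>m \<succ>\<^sub>A s \<succeq>\<^sub>A t\<close> and \<open>n \<succ>\<^sub>B t \<succeq>\<^sub>B s\<close>, i.e. \<open>A\<close> strictly prefers \<open>R\<^sub>A(s - q)\<close> to
  \<open>L\<^sub>A(p - t)\<close> while \<open>B\<close> weakly prefers \<open>L\<^sub>B(p - t)\<close> to \<open>R\<^sub>B(s - q)\<close>, contradicting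
  cross-side agreement.\<close>

lemma int_interval_between:
  assumes "int_interval I" "a \<in> I" "c \<in> I" "a \<le> b" "b \<le> c"
  shows "b \<in> I"
  using assms unfolding int_interval_def by blast

lemma weak_order_on_if_not_spref:
  assumes "weak_order_on I R" "x \<in> I" "y \<in> I" "\<not> spref R y x"
  shows "R x y"
  using assms unfolding weak_order_on_def spref_def by blast

lemma weak_order_on_spref_trans:
  assumes "weak_order_on I R" "x \<in> I" "y \<in> I" "z \<in> I" "spref R x y" "R y z"
  shows "spref R x z"
  using assms unfolding weak_order_on_def spref_def by blast

lemma single_peaked_left:
  assumes "single_peaked I R c" "a \<in> I" "b \<in> I" "a < b" "b \<le> c"
  shows "spref R b a"
  using assms unfolding single_peaked_def by blast

lemma single_peaked_right:
  assumes "single_peaked I R c" "a \<in> I" "b \<in> I" "c \<le> b" "b < a"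
  shows "spref R b a"
  using assms unfolding single_peaked_def by blast

lemma outcome_self [simp]: "outcome V Att P x x = Tie"
  by (simp add: outcome_def NA_def NB_def)

lemma is_NE_outcome_Tie:
  assumes "is_NE I RA RB V Att P s t"
  shows "outcome V Att P s t = Tie"
proof (cases "outcome V Att P s t")
  case WinA
  with assms show ?thesis by (auto simp: is_NE_def)
next
  case WinB
  with assms show ?thesis by (auto simp: is_NE_def)
qed simp

lemma is_NE_own_platform_weakly_preferred:
  assumes "is_NE I RA RB V Att P s t" "weak_order_on I RA" "weak_order_on I RB"
  shows "RA s t" "RB t s"
proof -
  have "s \<in> I" "t \<in> I"
    using assms(1) by (simp_all add: is_NE_def)
  moreover have "\<not> spref RA t s" "\<not> spref RB s t"
    using assms(1) is_NE_outcome_Tie[OF assms(1)] \<open>s \<in> I\<close> \<open>t \<in> I\<close>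
    unfolding is_NE_def by (metis outcome_self)+
  ultimately show "RA s t" "RB t s"
    using assms(2,3) weak_order_on_if_not_spref by blast+
qed

lemma leapfrogging_not_acceptable_to_both:
  assumes I: "int_interval I" and pq: "p \<in> I" "q \<in> I" "p < q"
    and orders: "weak_order_on I RA" "weak_order_on I RB"
    and sp: "single_peaked I RA p" "single_peaked I RB q"
    and cross: "cross_agree I RA RB p q"
    and st: "s \<in> I" "t \<in> I" "t < p" "q < s"
  shows "\<not> (RA s t \<and> RB t s)"
proof
  assume acc: "RA s t \<and> RB t s"
  define m where "m = p + (s - q)"
  define n where "n = q - (p - t)"
  have mI: "m \<in> I"
    using int_interval_between[OF I pq(1) st(1), of m] pq st by (simp add: m_def)
  have nI: "n \<in> I"
    using int_interval_between[OF I st(2) pq(2), of n] pq st by (simp add: n_def)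
  have "spref RA m s"
    using single_peaked_right[OF sp(1) st(1) mI] pq st by (simp add: m_def)
  then have "spref RA m t"
    using weak_order_on_spref_trans[OF orders(1) mI st(1,2)] acc by blast
  moreover have "spref RB n t"
    using single_peaked_left[OF sp(2) st(2) nI] pq st by (simp add: n_def)
  then have "spref RB n s"
    using weak_order_on_spref_trans[OF orders(2) nI st(2,1)] acc by blast
  moreover have "RA t m \<longleftrightarrow> RB n s"
    using cross[unfolded cross_agree_def, rule_format, of "s - q" "p - t"] mI nI st
    by (simp add: m_def n_def)
  ultimately show False
    unfolding spref_def by blast
qed

theorem theorem1:
  fixes I :: "int set" and p q :: int
    and RA RB :: "int \<Rightarrow> int \<Rightarrow> bool"
    and V :: "'v set" and \<theta> :: "'v \<Rightarrow> int"
    and P :: "'v \<Rightarrow> int \<Rightarrow> int \<Rightarrow> bool" and Att :: "'v \<Rightarrow> int set"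
  assumes I: "int_interval I"
    and pq: "p \<in> I" "q \<in> I" "p < q"
    and A_pref: "weak_order_on I RA" "unique_ideal I RA p"
    and B_pref: "weak_order_on I RB" "unique_ideal I RB q"
    and sp: "single_peaked I RA p" "single_peaked I RB q"
    and cross: "cross_agree I RA RB p q"
    and V: "finite V"
    and voters: "\<And>v. v \<in> V \<Longrightarrow> \<theta> v \<in> I \<and> strict_linear_on I (P v) \<and>
                   strict_single_peaked I (P v) (\<theta> v) \<and>
                   int_interval (Att v) \<and> Att v \<subseteq> I \<and> \<theta> v \<in> Att v"
  shows "\<not> (\<exists>s t. is_NE I RA RB V Att P s t \<and> t < p \<and> p < q \<and> q < s)"
proof
  assume "\<exists>s t. is_NE I RA RB V Att P s t \<and> t < p \<and> p < q \<and> q < s"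
  then obtain s t where ne: "is_NE I RA RB V Att P s t" and leap: "t < p" "q < s"
    by blast
  have "s \<in> I" "t \<in> I"
    using ne by (simp_all add: is_NE_def)
  moreover have "RA s t \<and> RB t s"
    using is_NE_own_platform_weakly_preferred[OF ne A_pref(1) B_pref(1)] by blast
  ultimately show False
    using leapfrogging_not_acceptable_to_both[OF I pq A_pref(1) B_pref(1) sp cross] leap
    by blast
qed

end
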